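(* Let $D_4=\langle a,b\mid a^4=b^2=1,\ bab=a^3\rangle$ be the dihedral group of order $8$ and $\mathsf{AUT}(D_4)$ the crossed module $\partial:D_4\to\mathrm{Aut}(D_4)$ with $\partial(g)$ the inner automorphism $h\mapsto ghg^{-1}$ and the tautological action. Then $\mathbf Z_0(\mathsf{AUT}(D_4))\cong C_2\times D_4$, and $$\pi_0(\mathbf Z_*(\mathsf{AUT}(D_4)))\cong C_2\times C_2,\qquad \pi_1(\mathbf Z_*(\mathsf{AUT}(D_4)))\cong C_2,$$ whereas Norrie's centre of $\mathsf{AUT}(D_4)$ is $\{1,a^2\}\to\{1\}$; in particular the inclusion $j_*$ of Norrie's centre into $\mathbf Z_*(\mathsf{AUT}(D_4))$ is not a weak equivalence (it is not an isomorphism on $\pi_0$).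
   Context: A crossed module $\mathbf G_*$: groups $G_1,G_0$, a homomorphism $\partial:G_1\to G_0$ and a left action $(x,a)\mapsto{}^xa$ of $G_0$ on $G_1$ by automorphisms, with $\partial({}^x a)=x\partial(a)x^{-1}$ and ${}^{\partial(b)}a=bab^{-1}$; $\pi_0=G_0/\mathrm{Im}\partial$, $\pi_1=\ker\partial$. Commutators $[x,t]=xtx^{-1}t^{-1}$. $\mathbf Z_0(\mathbf G_* )$ is the group of pairs $(x,\xi)$, $x\in G_0$, $\xi:G_0\to G_1$ with $\partial\xi(t)=[x,t]$, $\xi(\partial a)={}^xa\,a^{-1}$, $\xi(st)=\xi(s)\,{}^s\xi(t)$, product $(x,\xi)(y,\eta)=(xy,t\mapsto{}^x\eta(t)\xi(t))$. $\mathbf Z_*(\mathbf G_* )$ is the crossed module $\delta:G_1\to\mathbf Z_0(\mathbf G_* )$, $\delta(c)=(\partial c,\ t\mapsto c\,({}^tc)^{-1})$. Norrie's centre is the crossed module $\partial:\{a\in G_1:{}^xa=a\ \forall x\}\to\mathsf Z_{G_1}(G_0)$, where $\mathsf Z_{G_1}(G_0)$ is the set of central elements of $G_0$ acting trivially on $G_1$, and $j_*$ is given by inclusion on $G_1$ and $x\mapsto(x,\mathbf 1)$ on $G_0$. A weak equivalence is a morphism inducing isomorphisms on $\pi_0$ and $\pi_1$. *)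

theory Defs
  imports "HOL-Algebra.Algebra"
begin

definition crossed_module ::
  "('a, 'm) monoid_scheme \<Rightarrow> ('b, 'n) monoid_scheme \<Rightarrow> ('a \<Rightarrow> 'b) \<Rightarrow> ('b \<Rightarrow> 'a \<Rightarrow> 'a) \<Rightarrow> bool"
  where "crossed_module G1 G0 d act \<longleftrightarrow>
     group G1 \<and> group G0 \<and> d \<in> hom G1 G0 \<and>
     (\<forall>x\<in>carrier G0. (\<lambda>a\<in>carrier G1. act x a) \<in> auto G1) \<and>
     (\<forall>a\<in>carrier G1. act \<one>\<^bsub>G0\<^esub> a = a) \<and>
     (\<forall>x\<in>carrier G0. \<forall>y\<in>carrier G0. \<forall>a\<in>carrier G1.
        act (x \<otimes>\<^bsub>G0\<^esub> y) a = act x (act y a)) \<and>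
     (\<forall>x\<in>carrier G0. \<forall>a\<in>carrier G1.
        d (act x a) = x \<otimes>\<^bsub>G0\<^esub> d a \<otimes>\<^bsub>G0\<^esub> inv\<^bsub>G0\<^esub> x) \<and>
     (\<forall>a\<in>carrier G1. \<forall>b\<in>carrier G1.
        act (d b) a = b \<otimes>\<^bsub>G1\<^esub> a \<otimes>\<^bsub>G1\<^esub> inv\<^bsub>G1\<^esub> b)"

definition commut :: "('b, 'n) monoid_scheme \<Rightarrow> 'b \<Rightarrow> 'b \<Rightarrow> 'b"
  where "commut G x t = x \<otimes>\<^bsub>G\<^esub> t \<otimes>\<^bsub>G\<^esub> inv\<^bsub>G\<^esub> x \<otimes>\<^bsub>G\<^esub> inv\<^bsub>G\<^esub> t"

definition Z0 ::
  "('a, 'm) monoid_scheme \<Rightarrow> ('b, 'n) monoid_scheme \<Rightarrow> ('a \<Rightarrow> 'b) \<Rightarrow> ('b \<Rightarrow> 'a \<Rightarrow> 'a)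
     \<Rightarrow> ('b \<times> ('b \<Rightarrow> 'a)) monoid"
  where "Z0 G1 G0 d act =
    \<lparr>carrier = {(x, \<xi>). x \<in> carrier G0 \<and> \<xi> \<in> carrier G0 \<rightarrow>\<^sub>E carrier G1 \<and>
        (\<forall>t\<in>carrier G0. d (\<xi> t) = commut G0 x t) \<and>
        (\<forall>a\<in>carrier G1. \<xi> (d a) = act x a \<otimes>\<^bsub>G1\<^esub> inv\<^bsub>G1\<^esub> a) \<and>
        (\<forall>s\<in>carrier G0. \<forall>t\<in>carrier G0.
            \<xi> (s \<otimes>\<^bsub>G0\<^esub> t) = \<xi> s \<otimes>\<^bsub>G1\<^esub> act s (\<xi> t))},
     monoid.mult = (\<lambda>(x, \<xi>) (y, \<eta>). (x \<otimes>\<^bsub>G0\<^esub> y, \<lambda>t\<in>carrier G0. act x (\<eta> t) \<otimes>\<^bsub>G1\<^esub> \<xi> t)),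
     one = (\<one>\<^bsub>G0\<^esub>, \<lambda>t\<in>carrier G0. \<one>\<^bsub>G1\<^esub>)\<rparr>"

definition Zdelta ::
  "('a, 'm) monoid_scheme \<Rightarrow> ('b, 'n) monoid_scheme \<Rightarrow> ('a \<Rightarrow> 'b) \<Rightarrow> ('b \<Rightarrow> 'a \<Rightarrow> 'a)
     \<Rightarrow> 'a \<Rightarrow> 'b \<times> ('b \<Rightarrow> 'a)"
  where "Zdelta G1 G0 d act c =
    (d c, \<lambda>t\<in>carrier G0. c \<otimes>\<^bsub>G1\<^esub> inv\<^bsub>G1\<^esub> (act t c))"

definition Zact :: "('b \<Rightarrow> 'a \<Rightarrow> 'a) \<Rightarrow> 'b \<times> ('b \<Rightarrow> 'a) \<Rightarrow> 'a \<Rightarrow> 'a"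
  where "Zact act p a = act (fst p) a"

definition pi0 :: "('a, 'm) monoid_scheme \<Rightarrow> ('b, 'n) monoid_scheme \<Rightarrow> ('a \<Rightarrow> 'b) \<Rightarrow> 'b set monoid"
  where "pi0 G1 G0 d = G0 Mod (d ` carrier G1)"

definition pi1 :: "('a, 'm) monoid_scheme \<Rightarrow> ('b, 'n) monoid_scheme \<Rightarrow> ('a \<Rightarrow> 'b) \<Rightarrow> 'a monoid"
  where "pi1 G1 G0 d = \<lparr>carrier = kernel G1 G0 d, monoid.mult = monoid.mult G1, one = one G1\<rparr>"

definition pi0_map ::
  "('a, 'm) monoid_scheme \<Rightarrow> ('b, 'n) monoid_scheme \<Rightarrow> ('a \<Rightarrow> 'b) \<Rightarrow> ('c \<Rightarrow> 'b) \<Rightarrow> 'c set \<Rightarrow> 'b set"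
  where "pi0_map G1 G0 d f0 C = (d ` carrier G1) <#>\<^bsub>G0\<^esub> (f0 ` C)"

definition weak_equivalence where
  "weak_equivalence H1 H0 e G1 G0 d f1 f0 \<longleftrightarrow>
     pi0_map G1 G0 d f0 \<in> iso (pi0 H1 H0 e) (pi0 G1 G0 d) \<and>
     f1 \<in> iso (pi1 H1 H0 e) (pi1 G1 G0 d)"

definition norrie_G1 :: "('a, 'm) monoid_scheme \<Rightarrow> ('b, 'n) monoid_scheme \<Rightarrow> ('b \<Rightarrow> 'a \<Rightarrow> 'a) \<Rightarrow> 'a monoid"
  where "norrie_G1 G1 G0 act =
    \<lparr>carrier = {a \<in> carrier G1. \<forall>x\<in>carrier G0. act x a = a}, monoid.mult = monoid.mult G1, one = one G1\<rparr>"

definition norrie_G0 :: "('a, 'm) monoid_scheme \<Rightarrow> ('b, 'n) monoid_scheme \<Rightarrow> ('b \<Rightarrow> 'a \<Rightarrow> 'a) \<Rightarrow> 'b monoid"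
  where "norrie_G0 G1 G0 act =
    \<lparr>carrier = {x \<in> carrier G0. (\<forall>y\<in>carrier G0. x \<otimes>\<^bsub>G0\<^esub> y = y \<otimes>\<^bsub>G0\<^esub> x) \<and>
                                 (\<forall>a\<in>carrier G1. act x a = a)},
     monoid.mult = monoid.mult G0, one = one G0\<rparr>"

definition j0 :: "('a, 'm) monoid_scheme \<Rightarrow> ('b, 'n) monoid_scheme \<Rightarrow> 'b \<Rightarrow> 'b \<times> ('b \<Rightarrow> 'a)"
  where "j0 G1 G0 x = (x, \<lambda>t\<in>carrier G0. \<one>\<^bsub>G1\<^esub>)"

text \<open>Element (k,s), k<4, s<2, stands for a^k b^s.\<close>
definition D4 :: "(nat \<times> nat) monoid"
  where "D4 = \<lparr>carrier = {0..<4} \<times> {0..<2},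
     monoid.mult = (\<lambda>(k1, s1) (k2, s2). ((k1 + (if s1 = 0 then k2 else 4 - k2)) mod 4, (s1 + s2) mod 2)),
     one = (0, 0)\<rparr>"

definition D4_a :: "nat \<times> nat" where "D4_a = (1, 0)"
definition D4_b :: "nat \<times> nat" where "D4_b = (0, 1)"

definition AUT_d :: "('a, 'm) monoid_scheme \<Rightarrow> 'a \<Rightarrow> ('a \<Rightarrow> 'a)"
  where "AUT_d G g = (\<lambda>h\<in>carrier G. g \<otimes>\<^bsub>G\<^esub> h \<otimes>\<^bsub>G\<^esub> inv\<^bsub>G\<^esub> g)"

definition AUT_act :: "('a \<Rightarrow> 'a) \<Rightarrow> 'a \<Rightarrow> 'a"
  where "AUT_act \<phi> h = \<phi> h"

definition C2 :: "int monoid" where "C2 = integer_mod_group 2"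

end

theory Submission
  imports Defs
begin

(*
  The automorphisms of D4 are the eight maps a |-> a^u, b |-> a^j b with u = 1 or 3 (i.e. u = +-1 mod 4),
  so Aut(D4) is generated by the inner automorphisms together with the outer automorphism
  tau : b |-> a b.  For (x, xi) in Z0 the value of xi on an inner automorphism d(g) is forced to be
  x(g) g^-1, and the cocycle rule then determines xi from xi(tau) = a^c; the boundary condition
  d(xi(tau)) = [x, tau] forces x = (a |-> a^((-1)^c), b |-> a^j b).  Hence Z0 has sixteen elements,
  indexed by (c, j) in Z/4 x Z/4, with product (c, j) (c', j') = (+-c' + c, +-j' + j), the sign being
  (-1)^c; this is C2 x D4 via (c, j) |-> (c div 2, a^j b^c).  The image of delta is
  {(0,0), (0,2), (3,0), (3,2)}, the kernel of (c, j) |-> (j mod 2, c div 2 + c mod 2) onto C2 x C2,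
  and ker delta = {1, a^2}.  Norrie's centre has trivial G0-part, so its pi0 is trivial and cannot
  be isomorphic to the four-element pi0 of Z_*.
*)

section \<open>The automorphism crossed module of a group\<close>

lemma mult_AutoGroup:
  "\<phi> \<in> auto G \<Longrightarrow> \<psi> \<in> auto G \<Longrightarrow> \<phi> \<otimes>\<^bsub>AutoGroup G\<^esub> \<psi> = compose (carrier G) \<phi> \<psi>"
  by (simp add: AutoGroup_def BijGroup_def auto_def)

lemma one_AutoGroup: "\<one>\<^bsub>AutoGroup G\<^esub> = (\<lambda>x\<in>carrier G. x)"
  by (simp add: AutoGroup_def BijGroup_def)

lemma carrier_AutoGroup: "carrier (AutoGroup G) = auto G"
  by (simp add: AutoGroup_def)

lemma (in group) inv_AutoGroup:
  assumes "\<phi> \<in> auto G"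
  shows "inv\<^bsub>AutoGroup G\<^esub> \<phi> = (\<lambda>x\<in>carrier G. inv_into (carrier G) \<phi> x)"
proof (rule group.inv_equality[OF AutoGroup])
  have Bij: "\<phi> \<in> Bij (carrier G)" using assms by (simp add: auto_def)
  show "(\<lambda>x\<in>carrier G. inv_into (carrier G) \<phi> x) \<in> carrier (AutoGroup G)"
    using subgroup.m_inv_closed[OF subgroup_auto assms] by (simp add: carrier_AutoGroup inv_BijGroup Bij)
  then show "(\<lambda>x\<in>carrier G. inv_into (carrier G) \<phi> x) \<otimes>\<^bsub>AutoGroup G\<^esub> \<phi> = \<one>\<^bsub>AutoGroup G\<^esub>"
    using assms Bij by (simp add: carrier_AutoGroup mult_AutoGroup one_AutoGroup Bij_compose_restrict_eq)
qed (simp add: assms carrier_AutoGroup)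

lemma (in group) AUT_d_auto:
  assumes g: "g \<in> carrier G"
  shows "AUT_d G g \<in> auto G"
proof -
  have "AUT_d G g \<in> hom G G"
    using g by (intro homI) (simp_all add: AUT_d_def m_assoc flip: m_assoc[of "inv g"])
  moreover have "bij_betw (AUT_d G g) (carrier G) (carrier G)"
  proof (rule bij_betw_byWitness[where f' = "AUT_d G (inv g)"])
    have cancel: "inv x \<otimes> (x \<otimes> y) = y" "x \<otimes> (inv x \<otimes> y) = y"
      if "x \<in> carrier G" "y \<in> carrier G" for x y
      using that by (simp_all flip: m_assoc)
    show "\<forall>h\<in>carrier G. AUT_d G (inv g) (AUT_d G g h) = h"
      and "\<forall>h\<in>carrier G. AUT_d G g (AUT_d G (inv g) h) = h"
      using g by (simp_all add: AUT_d_def m_assoc cancel)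
  qed (use g in \<open>auto simp: AUT_d_def\<close>)
  ultimately show ?thesis by (simp add: auto_def Bij_def AUT_d_def)
qed

lemma (in group) AUT_d_hom: "AUT_d G \<in> hom G (AutoGroup G)"
proof (rule homI)
  fix g h assume "g \<in> carrier G" "h \<in> carrier G"
  then show "AUT_d G (g \<otimes> h) = AUT_d G g \<otimes>\<^bsub>AutoGroup G\<^esub> AUT_d G h"
    by (simp add: mult_AutoGroup AUT_d_auto)
       (auto simp: compose_def AUT_d_def m_assoc inv_mult_group intro!: restrict_ext)
qed (simp add: carrier_AutoGroup AUT_d_auto)

lemma (in group) AUT_d_conj:
  assumes \<phi>: "\<phi> \<in> auto G" and a: "a \<in> carrier G"
  shows "AUT_d G (\<phi> a) = \<phi> \<otimes>\<^bsub>AutoGroup G\<^esub> AUT_d G a \<otimes>\<^bsub>AutoGroup G\<^esub> inv\<^bsub>AutoGroup G\<^esub> \<phi>"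
proof -
  interpret A: group "AutoGroup G" by (rule AutoGroup)
  interpret \<phi>: group_hom G G \<phi> using \<phi> by unfold_locales (simp add: auto_def)
  have bij: "bij_betw \<phi> (carrier G) (carrier G)" using \<phi> by (simp add: auto_def Bij_def)
  have inv\<phi>: "inv\<^bsub>AutoGroup G\<^esub> \<phi> \<in> auto G" using \<phi> by (simp flip: carrier_AutoGroup)
  have da: "AUT_d G a \<in> auto G" using a by (rule AUT_d_auto)
  have "AUT_d G (\<phi> a) h = compose (carrier G) (compose (carrier G) \<phi> (AUT_d G a)) (inv\<^bsub>AutoGroup G\<^esub> \<phi>) h"
    if h: "h \<in> carrier G" for h
  proof -
    have h': "inv_into (carrier G) \<phi> h \<in> carrier G" and \<phi>h: "\<phi> (inv_into (carrier G) \<phi> h) = h"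
      using bij h by (auto simp: bij_betw_def inv_into_into f_inv_into_f)
    show ?thesis using h h' \<phi>h a by (simp add: compose_def inv_AutoGroup \<phi> AUT_d_def)
  qed
  moreover have "\<phi> \<otimes>\<^bsub>AutoGroup G\<^esub> AUT_d G a \<in> auto G"
    using \<phi> da A.m_closed by (simp add: carrier_AutoGroup)
  ultimately show ?thesis
    by (simp only: mult_AutoGroup[OF _ inv\<phi>] mult_AutoGroup[OF \<phi> da])
       (intro extensionalityI[OF _ compose_extensional], simp_all add: AUT_d_def)
qed

lemma (in group) crossed_module_AUT: "crossed_module G (AutoGroup G) (AUT_d G) AUT_act"
  unfolding crossed_module_def
proof (intro conjI ballI)
  interpret A: group "AutoGroup G" by (rule AutoGroup)
  show "group G" "group (AutoGroup G)" "AUT_d G \<in> hom G (AutoGroup G)"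
    by (rule is_group, rule A.is_group, rule AUT_d_hom)
  show "(\<lambda>a\<in>carrier G. AUT_act \<phi> a) \<in> auto G" if "\<phi> \<in> carrier (AutoGroup G)" for \<phi>
    using that by (simp add: AUT_act_def extensional_restrict carrier_AutoGroup auto_def Bij_def)
  show "AUT_act (\<phi> \<otimes>\<^bsub>AutoGroup G\<^esub> \<psi>) a = AUT_act \<phi> (AUT_act \<psi> a)"
    if "\<phi> \<in> carrier (AutoGroup G)" "\<psi> \<in> carrier (AutoGroup G)" "a \<in> carrier G" for \<phi> \<psi> a
    using that by (simp add: AUT_act_def carrier_AutoGroup mult_AutoGroup compose_def)
  show "AUT_d G (AUT_act \<phi> a) = \<phi> \<otimes>\<^bsub>AutoGroup G\<^esub> AUT_d G a \<otimes>\<^bsub>AutoGroup G\<^esub> inv\<^bsub>AutoGroup G\<^esub> \<phi>"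
    if "\<phi> \<in> carrier (AutoGroup G)" "a \<in> carrier G" for \<phi> a
    using that by (simp add: AUT_act_def carrier_AutoGroup AUT_d_conj)
  show "AUT_act \<one>\<^bsub>AutoGroup G\<^esub> a = a" if "a \<in> carrier G" for a
    using that by (simp add: AUT_act_def one_AutoGroup)
  show "AUT_act (AUT_d G b) a = b \<otimes> a \<otimes> inv b" if "a \<in> carrier G" "b \<in> carrier G" for a b
    using that by (simp add: AUT_act_def AUT_d_def)
qed

lemma (in group) AUT_d_in_carrier: "g \<in> carrier G \<Longrightarrow> AUT_d G g \<in> carrier (AutoGroup G)"
  by (simp add: carrier_AutoGroup AUT_d_auto)

lemma group_of_mult_preserving_bij:
  assumes G: "group G"
    and closed: "\<And>x y. x \<in> carrier M \<Longrightarrow> y \<in> carrier M \<Longrightarrow> x \<otimes>\<^bsub>M\<^esub> y \<in> carrier M"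
    and one_closed: "\<one>\<^bsub>M\<^esub> \<in> carrier M"
    and bij: "bij_betw h (carrier M) (carrier G)"
    and h_mult: "\<And>x y. x \<in> carrier M \<Longrightarrow> y \<in> carrier M \<Longrightarrow> h (x \<otimes>\<^bsub>M\<^esub> y) = h x \<otimes>\<^bsub>G\<^esub> h y"
    and h_one: "h \<one>\<^bsub>M\<^esub> = \<one>\<^bsub>G\<^esub>"
  shows "group M"
proof -
  interpret G: group G by (rule G)
  have inj: "inj_on h (carrier M)" and surj: "h ` carrier M = carrier G"
    using bij by (auto simp: bij_betw_def)
  have h_closed: "h x \<in> carrier G" if "x \<in> carrier M" for x
    using surj that by blast
  show ?thesis
  proof (rule groupI[OF closed one_closed])
    fix x y z assume "x \<in> carrier M" "y \<in> carrier M" "z \<in> carrier M"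
    then show "x \<otimes>\<^bsub>M\<^esub> y \<otimes>\<^bsub>M\<^esub> z = x \<otimes>\<^bsub>M\<^esub> (y \<otimes>\<^bsub>M\<^esub> z)"
      by (intro inj_onD[OF inj]) (simp_all add: closed h_mult h_closed G.m_assoc)
  next
    fix x assume x: "x \<in> carrier M"
    then show "\<one>\<^bsub>M\<^esub> \<otimes>\<^bsub>M\<^esub> x = x"
      by (intro inj_onD[OF inj]) (simp_all add: closed one_closed h_mult h_one h_closed)
    obtain y where y: "y \<in> carrier M" "h y = inv\<^bsub>G\<^esub> h x"
      using surj G.inv_closed[OF h_closed[OF x]] by (metis imageE)
    have "y \<otimes>\<^bsub>M\<^esub> x = \<one>\<^bsub>M\<^esub>"
      by (rule inj_onD[OF inj]) (simp_all add: x y closed one_closed h_mult h_one h_closed)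
    with y show "\<exists>y\<in>carrier M. y \<otimes>\<^bsub>M\<^esub> x = \<one>\<^bsub>M\<^esub>" by blast
  qed
qed

section \<open>The dihedral group D4\<close>

lemma less_4_iff: "(n::nat) < 4 \<longleftrightarrow> n \<in> {0,1,2,3}"
  by auto

lemma carrier_D4: "carrier D4 = {(0,0),(0,1),(1,0),(1,1),(2,0),(2,1),(3,0),(3,1)}"
  by (auto simp: D4_def)

lemma mem_carrier_D4 [simp]: "x \<in> carrier D4 \<longleftrightarrow> fst x < 4 \<and> snd x < 2"
  by (cases x) (auto simp: D4_def)

lemma D4_mult [simp]:
  "(k1, s1) \<otimes>\<^bsub>D4\<^esub> (k2, s2) = ((k1 + (if s1 = 0 then k2 else 4 - k2)) mod 4, (s1 + s2) mod 2)"
  by (simp add: D4_def)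

lemma D4_one [simp]: "\<one>\<^bsub>D4\<^esub> = (0, 0)"
  by (simp add: D4_def)

lemma ball_D4:
  "(\<forall>x\<in>carrier D4. P x) \<longleftrightarrow>
     P (0,0) \<and> P (0,1) \<and> P (1,0) \<and> P (1,1) \<and> P (2,0) \<and> P (2,1) \<and> P (3,0) \<and> P (3,1)"
  unfolding carrier_D4 by simp

lemma group_D4: "group D4"
proof (rule groupI)
  have "\<forall>x\<in>carrier D4. \<forall>y\<in>carrier D4. \<forall>z\<in>carrier D4. x \<otimes>\<^bsub>D4\<^esub> y \<otimes>\<^bsub>D4\<^esub> z = x \<otimes>\<^bsub>D4\<^esub> (y \<otimes>\<^bsub>D4\<^esub> z)"
    unfolding ball_D4 by simp
  then show "x \<otimes>\<^bsub>D4\<^esub> y \<otimes>\<^bsub>D4\<^esub> z = x \<otimes>\<^bsub>D4\<^esub> (y \<otimes>\<^bsub>D4\<^esub> z)"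
    if "x \<in> carrier D4" "y \<in> carrier D4" "z \<in> carrier D4" for x y z
    using that by blast
  have "\<forall>x\<in>carrier D4. \<exists>y\<in>carrier D4. y \<otimes>\<^bsub>D4\<^esub> x = \<one>\<^bsub>D4\<^esub>"
    unfolding ball_D4 by (simp add: carrier_D4)
  then show "\<exists>y\<in>carrier D4. y \<otimes>\<^bsub>D4\<^esub> x = \<one>\<^bsub>D4\<^esub>" if "x \<in> carrier D4" for x
    using that by blast
qed (auto simp: D4_def)

lemma D4_inv:
  "x \<in> carrier D4 \<Longrightarrow> inv\<^bsub>D4\<^esub> x = (if snd x = 0 then (4 - fst x) mod 4 else fst x, snd x)"
proof -
  have "\<forall>x\<in>carrier D4. inv\<^bsub>D4\<^esub> x = (if snd x = 0 then (4 - fst x) mod 4 else fst x, snd x)"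
    unfolding ball_D4 by (simp add: group.inv_equality[OF group_D4])
  then show "x \<in> carrier D4 \<Longrightarrow> ?thesis" by blast
qed

lemma D4_a_pow: "D4_a [^]\<^bsub>D4\<^esub> (n::nat) = (n mod 4, 0)"
  by (induction n) (simp_all add: D4_a_def mod_Suc_eq)

lemma D4_b_pow: "D4_b [^]\<^bsub>D4\<^esub> (n::nat) = (0, n mod 2)"
  by (induction n) (simp_all add: D4_b_def mod_Suc_eq)

lemma D4_normal_form: "x \<in> carrier D4 \<Longrightarrow> x = D4_a [^]\<^bsub>D4\<^esub> fst x \<otimes>\<^bsub>D4\<^esub> D4_b [^]\<^bsub>D4\<^esub> snd x"
  by (cases x) (simp add: D4_a_pow D4_b_pow)

lemma D4_relations:
  "D4_a [^]\<^bsub>D4\<^esub> (4::nat) = \<one>\<^bsub>D4\<^esub>" "D4_b [^]\<^bsub>D4\<^esub> (2::nat) = \<one>\<^bsub>D4\<^esub>"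
  "D4_b \<otimes>\<^bsub>D4\<^esub> D4_a \<otimes>\<^bsub>D4\<^esub> D4_b = D4_a [^]\<^bsub>D4\<^esub> (3::nat)"
  by (simp_all add: D4_a_pow D4_b_pow) (simp add: D4_a_def D4_b_def)

section \<open>Automorphisms of D4\<close>

definition D4_aut :: "nat \<Rightarrow> nat \<Rightarrow> nat \<times> nat \<Rightarrow> nat \<times> nat" where
  "D4_aut u j = (\<lambda>p\<in>carrier D4. ((u * fst p + snd p * j) mod 4, snd p))"

lemma D4_aut_apply [simp]: "k < 4 \<Longrightarrow> s < 2 \<Longrightarrow> D4_aut u j (k, s) = ((u * k + s * j) mod 4, s)"
  by (simp add: D4_aut_def)

lemma D4_aut_extensional: "D4_aut u j \<in> extensional (carrier D4)"
  by (simp add: D4_aut_def)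

lemma D4_aut_eq_iff [simp]: "D4_aut u j = D4_aut u' j' \<longleftrightarrow> u mod 4 = u' mod 4 \<and> j mod 4 = j' mod 4"
proof
  assume "D4_aut u j = D4_aut u' j'"
  then have "D4_aut u j (1,0) = D4_aut u' j' (1,0)" "D4_aut u j (0,1) = D4_aut u' j' (0,1)"
    by simp_all
  then show "u mod 4 = u' mod 4 \<and> j mod 4 = j' mod 4" by simp
next
  assume "u mod 4 = u' mod 4 \<and> j mod 4 = j' mod 4"
  then show "D4_aut u j = D4_aut u' j'"
    unfolding D4_aut_def by (intro restrict_ext) (metis mod_add_cong mod_mult_cong)
qed

lemma compose_D4_aut:
  "compose (carrier D4) (D4_aut u1 j1) (D4_aut u2 j2) = D4_aut (u1 * u2 mod 4) ((u1 * j2 + j1) mod 4)"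
proof (rule extensionalityI[OF compose_extensional D4_aut_extensional])
  fix p assume "p \<in> carrier D4"
  then obtain k s where p: "p = (k, s)" "k < 4" "s < 2" by (cases p) simp
  have "(u1 * ((u2 * k + s * j2) mod 4) + s * j1) mod 4 = (u1 * (u2 * k + s * j2) + s * j1) mod 4"
    by (intro mod_add_cong mod_mult_cong) simp_all
  also have "\<dots> = (u1 * u2 * k + s * (u1 * j2 + j1)) mod 4"
    by (simp add: algebra_simps)
  also have "\<dots> = (u1 * u2 mod 4 * k + s * ((u1 * j2 + j1) mod 4)) mod 4"
    by (intro mod_add_cong mod_mult_cong) simp_all
  finally show "compose (carrier D4) (D4_aut u1 j1) (D4_aut u2 j2) p
      = D4_aut (u1 * u2 mod 4) ((u1 * j2 + j1) mod 4) p"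
    using p by (simp add: compose_def)
qed

lemma D4_aut_1_0: "x \<in> carrier D4 \<Longrightarrow> D4_aut 1 0 x = x"
  by (cases x) simp

lemma D4_aut_inverse:
  assumes "u \<in> {1,3}" "x \<in> carrier D4"
  shows "D4_aut u (3 * u * j mod 4) (D4_aut u j x) = x" "D4_aut u j (D4_aut u (3 * u * j mod 4) x) = x"
proof -
  have "(u * (3 * u * j mod 4) + j) mod 4 = (u * (3 * u * j) + j) mod 4"
    by (intro mod_add_cong mod_mult_cong) simp_all
  also have "\<dots> = 0" using assms(1) by (auto simp: algebra_simps)
  finally have "D4_aut u j (D4_aut u (3 * u * j mod 4) x) = D4_aut 1 0 x"
    using compose_D4_aut[of u j u "3 * u * j mod 4"] assms
    by (auto simp: compose_def dest: fun_cong[where x = x])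
  moreover have "D4_aut u (3 * u * j mod 4) (D4_aut u j x) = D4_aut 1 0 x"
    using compose_D4_aut[of u "3 * u * j mod 4" u j] assms
    by (auto simp: compose_def mod_simps dest: fun_cong[where x = x])
  ultimately show "D4_aut u (3 * u * j mod 4) (D4_aut u j x) = x" "D4_aut u j (D4_aut u (3 * u * j mod 4) x) = x"
    by (simp_all only: D4_aut_1_0[OF assms(2)])
qed

lemma D4_aut_closed: "x \<in> carrier D4 \<Longrightarrow> D4_aut u j x \<in> carrier D4"
  by (cases x) simp

lemma D4_aut_in_auto:
  assumes u: "u \<in> {1,3}" and j: "j < 4"
  shows "D4_aut u j \<in> auto D4"
proof -
  have "\<forall>u\<in>{1,3}. \<forall>j\<in>{0,1,2,3}. \<forall>x\<in>carrier D4. \<forall>y\<in>carrier D4.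
      D4_aut u j (x \<otimes>\<^bsub>D4\<^esub> y) = D4_aut u j x \<otimes>\<^bsub>D4\<^esub> D4_aut u j y"
    unfolding ball_D4 by simp
  then have "\<forall>x\<in>carrier D4. \<forall>y\<in>carrier D4. D4_aut u j (x \<otimes>\<^bsub>D4\<^esub> y) = D4_aut u j x \<otimes>\<^bsub>D4\<^esub> D4_aut u j y"
    using u j unfolding less_4_iff by blast
  then have "D4_aut u j \<in> hom D4 D4"
    by (intro homI) (simp_all add: D4_aut_closed del: mem_carrier_D4)
  moreover have "bij_betw (D4_aut u j) (carrier D4) (carrier D4)"
    by (rule bij_betw_byWitness[where f' = "D4_aut u (3 * u * j mod 4)"])
       (simp_all add: D4_aut_inverse[OF u] D4_aut_closed image_subset_iff del: mem_carrier_D4)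
  ultimately show ?thesis
    by (simp add: auto_def Bij_def D4_aut_extensional)
qed

lemma D4_hom_eqI:
  assumes G: "group G" and f: "f \<in> hom D4 G" and g: "g \<in> hom D4 G"
    and a: "f D4_a = g D4_a" and b: "f D4_b = g D4_b" and x: "x \<in> carrier D4"
  shows "f x = g x"
proof -
  interpret D4: group D4 by (rule group_D4)
  have ab: "D4_a \<in> carrier D4" "D4_b \<in> carrier D4" by (simp_all add: D4_a_def D4_b_def)
  have on_normal_form: "h (D4_a [^]\<^bsub>D4\<^esub> k \<otimes>\<^bsub>D4\<^esub> D4_b [^]\<^bsub>D4\<^esub> s)
      = h D4_a [^]\<^bsub>G\<^esub> k \<otimes>\<^bsub>G\<^esub> h D4_b [^]\<^bsub>G\<^esub> s" if "h \<in> hom D4 G" for h and k s :: nat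
    using ab that by (simp add: hom_mult hom_nat_pow[OF that _ group_D4 G] del: mem_carrier_D4)
  have "f x = f (D4_a [^]\<^bsub>D4\<^esub> fst x \<otimes>\<^bsub>D4\<^esub> D4_b [^]\<^bsub>D4\<^esub> snd x)"
    using x by (subst D4_normal_form) simp_all
  also have "\<dots> = g (D4_a [^]\<^bsub>D4\<^esub> fst x \<otimes>\<^bsub>D4\<^esub> D4_b [^]\<^bsub>D4\<^esub> snd x)"
    by (simp only: on_normal_form f g a b)
  also have "\<dots> = g x"
    using x by (subst (2) D4_normal_form) simp_all
  finally show ?thesis .
qed

lemma D4_aut_of_generator_images:
  "\<forall>x\<in>carrier D4. \<forall>y\<in>carrier D4. x \<otimes>\<^bsub>D4\<^esub> x \<noteq> \<one>\<^bsub>D4\<^esub> \<longrightarrow> x \<otimes>\<^bsub>D4\<^esub> y \<noteq> y \<otimes>\<^bsub>D4\<^esub> x \<longrightarrow>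
     fst x \<in> {1,3} \<and> x = D4_aut (fst x) (fst y) D4_a \<and> y = D4_aut (fst x) (fst y) D4_b"
  unfolding ball_D4 by (simp add: D4_a_def D4_b_def)

lemma auto_D4_cases:
  assumes f: "f \<in> auto D4"
  obtains u j where "u \<in> {1,3}" "j < 4" "f = D4_aut u j"
proof -
  have hom: "f \<in> hom D4 D4" and ext: "f \<in> extensional (carrier D4)"
    and inj: "inj_on f (carrier D4)"
    using f by (auto simp: auto_def Bij_def bij_betw_def)
  interpret group_hom D4 D4 f
    using group_D4 hom by (simp add: group_hom_def group_hom_axioms_def)
  define x y where "x = f D4_a" and "y = f D4_b"
  have xy: "x \<in> carrier D4" "y \<in> carrier D4"
    unfolding x_def y_def by (intro hom_closed; simp add: D4_a_def D4_b_def)+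
  have "f (D4_a \<otimes>\<^bsub>D4\<^esub> D4_a) \<noteq> f \<one>\<^bsub>D4\<^esub>"
    by (rule inj_on_contraD[OF inj]) (simp_all add: D4_a_def)
  then have "x \<otimes>\<^bsub>D4\<^esub> x \<noteq> \<one>\<^bsub>D4\<^esub>"
    by (simp add: x_def D4_a_def del: D4_mult D4_one)
  moreover have "f (D4_a \<otimes>\<^bsub>D4\<^esub> D4_b) \<noteq> f (D4_b \<otimes>\<^bsub>D4\<^esub> D4_a)"
    by (rule inj_on_contraD[OF inj]) (simp_all add: D4_a_def D4_b_def)
  then have "x \<otimes>\<^bsub>D4\<^esub> y \<noteq> y \<otimes>\<^bsub>D4\<^esub> x"
    by (simp add: x_def y_def D4_a_def D4_b_def del: D4_mult)
  ultimately have u: "fst x \<in> {1,3}" and a: "x = D4_aut (fst x) (fst y) D4_a"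
    and b: "y = D4_aut (fst x) (fst y) D4_b"
    using D4_aut_of_generator_images xy by blast+
  have j: "fst y < 4" using xy by simp
  have "f = D4_aut (fst x) (fst y)"
  proof (rule extensionalityI[OF ext D4_aut_extensional])
    fix p assume "p \<in> carrier D4"
    then show "f p = D4_aut (fst x) (fst y) p"
      using D4_hom_eqI[OF group_D4 hom] D4_aut_in_auto[OF u j] a b
      by (simp add: auto_def x_def y_def)
  qed
  with u j that show ?thesis by blast
qed

lemma carrier_AutoGroup_D4:
  "carrier (AutoGroup D4) = {D4_aut 1 0, D4_aut 1 1, D4_aut 1 2, D4_aut 1 3,
                             D4_aut 3 0, D4_aut 3 1, D4_aut 3 2, D4_aut 3 3}"
proof -
  have "auto D4 = {D4_aut u j |u j. u \<in> {1,3} \<and> j < 4}"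
    using D4_aut_in_auto by (blast elim: auto_D4_cases)
  also have "\<dots> = {D4_aut 1 0, D4_aut 1 1, D4_aut 1 2, D4_aut 1 3,
                   D4_aut 3 0, D4_aut 3 1, D4_aut 3 2, D4_aut 3 3}"
    by (auto simp: less_Suc_eq numeral_eq_Suc simp del: D4_aut_eq_iff)
  finally show ?thesis by (simp add: carrier_AutoGroup)
qed

lemma ball_AutoGroup_D4:
  "(\<forall>t\<in>carrier (AutoGroup D4). P t) \<longleftrightarrow>
     P (D4_aut 1 0) \<and> P (D4_aut 1 1) \<and> P (D4_aut 1 2) \<and> P (D4_aut 1 3) \<and>
     P (D4_aut 3 0) \<and> P (D4_aut 3 1) \<and> P (D4_aut 3 2) \<and> P (D4_aut 3 3)"
  unfolding carrier_AutoGroup_D4 by simp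

lemma D4_aut_mult:
  "u1 \<in> {1,3} \<Longrightarrow> j1 < 4 \<Longrightarrow> u2 \<in> {1,3} \<Longrightarrow> j2 < 4 \<Longrightarrow>
    D4_aut u1 j1 \<otimes>\<^bsub>AutoGroup D4\<^esub> D4_aut u2 j2 = D4_aut (u1 * u2 mod 4) ((u1 * j2 + j1) mod 4)"
  by (simp add: mult_AutoGroup D4_aut_in_auto compose_D4_aut)

lemma group_AutoGroup_D4: "group (AutoGroup D4)"
  by (rule group.AutoGroup[OF group_D4])

lemma one_AutoGroup_D4: "\<one>\<^bsub>AutoGroup D4\<^esub> = D4_aut 1 0"
  by (auto simp: one_AutoGroup D4_aut_def intro!: restrict_ext)

lemma D4_aut_inv:
  assumes "u \<in> {1,3}" "j < 4"
  shows "inv\<^bsub>AutoGroup D4\<^esub> (D4_aut u j) = D4_aut u (3 * u * j mod 4)"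
proof (rule group.inv_equality[OF group_AutoGroup_D4])
  show "D4_aut u (3 * u * j mod 4) \<otimes>\<^bsub>AutoGroup D4\<^esub> D4_aut u j = \<one>\<^bsub>AutoGroup D4\<^esub>"
    using assms by (auto simp: D4_aut_mult one_AutoGroup_D4 mod_simps)
qed (use assms in \<open>simp_all add: carrier_AutoGroup D4_aut_in_auto\<close>)

lemma AUT_d_D4:
  "g \<in> carrier D4 \<Longrightarrow> AUT_d D4 g = D4_aut (if snd g = 0 then 1 else 3) (2 * fst g mod 4)"
proof -
  have "\<forall>g\<in>carrier D4. \<forall>h\<in>carrier D4.
      g \<otimes>\<^bsub>D4\<^esub> h \<otimes>\<^bsub>D4\<^esub> inv\<^bsub>D4\<^esub> g = D4_aut (if snd g = 0 then 1 else 3) (2 * fst g mod 4) h"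
    unfolding ball_D4 by (simp add: D4_inv)
  then show "g \<in> carrier D4 \<Longrightarrow> ?thesis"
    unfolding AUT_d_def by (intro extensionalityI[OF _ D4_aut_extensional]) (auto simp del: mem_carrier_D4)
qed

section \<open>Norrie's centre of AUT(D4)\<close>

lemma Norrie_centre_G1_AUT_D4:
  "carrier (norrie_G1 D4 (AutoGroup D4) AUT_act) = {\<one>\<^bsub>D4\<^esub>, D4_a [^]\<^bsub>D4\<^esub> (2::nat)}"
proof -
  have "\<forall>a\<in>carrier D4. (\<forall>t\<in>carrier (AutoGroup D4). t a = a) \<longleftrightarrow> a = (0,0) \<or> a = (2,0)"
    unfolding ball_D4 ball_AutoGroup_D4 by simp
  then have "{a \<in> carrier D4. \<forall>t\<in>carrier (AutoGroup D4). t a = a} = {a \<in> carrier D4. a = (0,0) \<or> a = (2,0)}"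
    by blast
  also have "\<dots> = {(0,0), (2,0)}" by auto
  finally show ?thesis
    by (simp add: norrie_G1_def AUT_act_def D4_a_pow)
qed

lemma Norrie_centre_G0_AUT_D4: "carrier (norrie_G0 D4 (AutoGroup D4) AUT_act) = {\<one>\<^bsub>AutoGroup D4\<^esub>}"
proof -
  have "\<forall>t\<in>carrier (AutoGroup D4). (\<forall>a\<in>carrier D4. t a = a) \<longleftrightarrow> t = \<one>\<^bsub>AutoGroup D4\<^esub>"
    unfolding ball_AutoGroup_D4 ball_D4 one_AutoGroup_D4 by simp
  moreover have "\<one>\<^bsub>AutoGroup D4\<^esub> \<in> carrier (AutoGroup D4)"
    "\<forall>t\<in>carrier (AutoGroup D4). \<one>\<^bsub>AutoGroup D4\<^esub> \<otimes>\<^bsub>AutoGroup D4\<^esub> t = t \<otimes>\<^bsub>AutoGroup D4\<^esub> \<one>\<^bsub>AutoGroup D4\<^esub>"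
    using group.is_monoid[OF group_AutoGroup_D4] by (simp_all add: monoid.l_one monoid.r_one)
  ultimately show ?thesis
    unfolding norrie_G0_def AUT_act_def by auto
qed

section \<open>The group \<open>Z\<^sub>0(AUT(D4))\<close>\<close>

type_synonym Z0_elt = "((nat \<times> nat) \<Rightarrow> nat \<times> nat) \<times> (((nat \<times> nat) \<Rightarrow> nat \<times> nat) \<Rightarrow> nat \<times> nat)"

abbreviation Z0_AUT_D4 :: "Z0_elt monoid"
  where "Z0_AUT_D4 \<equiv> Z0 D4 (AutoGroup D4) (AUT_d D4) AUT_act"

text \<open>\<^term>\<open>Z0_elem c j\<close> is the pair \<open>(x, \<xi>)\<close> with \<open>x = D4_aut u j\<close> for
  \<open>u = 1 + 2 (c mod 2)\<close>, i.e. \<open>u = (-1)^c\<close> modulo 4, and \<open>\<xi> (D4_aut u' j') = a^(c j' + [u' = 3] j)\<close>.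
  In particular \<open>\<xi>\<close> maps the outer automorphism \<open>D4_aut 1 1\<close> to \<open>a^c\<close>.\<close>

definition Z0_cochain :: "nat \<Rightarrow> nat \<Rightarrow> (nat \<times> nat \<Rightarrow> nat \<times> nat) \<Rightarrow> nat \<times> nat" where
  "Z0_cochain c j t = ((c * fst (t (0,1)) + of_bool (fst (t (1,0)) = 3) * j) mod 4, 0)"

definition Z0_elem :: "nat \<Rightarrow> nat \<Rightarrow> Z0_elt" where
  "Z0_elem c j = (D4_aut (1 + 2 * (c mod 2)) j, restrict (Z0_cochain c j) (carrier (AutoGroup D4)))"

lemma Z0_cochain_D4_aut [simp]:
  "Z0_cochain c j (D4_aut u j') = ((c * (j' mod 4) + of_bool (u mod 4 = 3) * j) mod 4, 0)"
  by (simp add: Z0_cochain_def)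

lemma Z0_elem_in_carrier:
  assumes c: "c < 4" and j: "j < 4"
  shows "Z0_elem c j \<in> carrier Z0_AUT_D4"
proof -
  have cj: "c \<in> {0,1,2,3}" "j \<in> {0,1,2,3}" using c j by (simp_all only: less_4_iff)
  have "\<forall>c\<in>{0,1,2,3}. \<forall>j\<in>{0,1,2,3}. \<forall>t\<in>carrier (AutoGroup D4).
      AUT_d D4 (Z0_cochain c j t) = commut (AutoGroup D4) (D4_aut (1 + 2 * (c mod 2)) j) t"
    unfolding ball_AutoGroup_D4 by (simp add: AUT_d_D4 commut_def D4_aut_mult D4_aut_inv)
  then have boundary: "\<forall>t\<in>carrier (AutoGroup D4).
      AUT_d D4 (Z0_cochain c j t) = commut (AutoGroup D4) (D4_aut (1 + 2 * (c mod 2)) j) t"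
    using cj by blast
  have "\<forall>c\<in>{0,1,2,3}. \<forall>j\<in>{0,1,2,3}. \<forall>a\<in>carrier D4.
      Z0_cochain c j (AUT_d D4 a) = D4_aut (1 + 2 * (c mod 2)) j a \<otimes>\<^bsub>D4\<^esub> inv\<^bsub>D4\<^esub> a"
    unfolding ball_D4 by (simp add: AUT_d_D4 D4_inv)
  then have on_inner: "\<forall>a\<in>carrier D4.
      Z0_cochain c j (AUT_d D4 a) = D4_aut (1 + 2 * (c mod 2)) j a \<otimes>\<^bsub>D4\<^esub> inv\<^bsub>D4\<^esub> a"
    using cj by blast
  have "\<forall>c\<in>{0,1,2,3}. \<forall>j\<in>{0,1,2,3}. \<forall>s\<in>carrier (AutoGroup D4). \<forall>t\<in>carrier (AutoGroup D4).
      Z0_cochain c j (s \<otimes>\<^bsub>AutoGroup D4\<^esub> t) = Z0_cochain c j s \<otimes>\<^bsub>D4\<^esub> s (Z0_cochain c j t)"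
    unfolding ball_AutoGroup_D4 by (simp add: D4_aut_mult)
  then have cocycle: "\<forall>s\<in>carrier (AutoGroup D4). \<forall>t\<in>carrier (AutoGroup D4).
      Z0_cochain c j (s \<otimes>\<^bsub>AutoGroup D4\<^esub> t) = Z0_cochain c j s \<otimes>\<^bsub>D4\<^esub> s (Z0_cochain c j t)"
    using cj by blast
  have "D4_aut (1 + 2 * (c mod 2)) j \<in> carrier (AutoGroup D4)"
    using j D4_aut_in_auto[of "1 + 2 * (c mod 2)" j] by (simp add: carrier_AutoGroup mod2_eq_if)
  moreover have "Z0_cochain c j t \<in> carrier D4" for t
    by (simp add: Z0_cochain_def)
  ultimately show ?thesis
    using boundary on_inner cocycle group.AUT_d_in_carrier[OF group_D4] monoid.m_closed[OF group.is_monoid[OF group_AutoGroup_D4]]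
    unfolding Z0_def Z0_elem_def AUT_act_def
    by (simp del: mem_carrier_D4 Z0_cochain_D4_aut)
qed

lemma AutoGroup_D4_decomposition:
  "\<forall>t\<in>carrier (AutoGroup D4). \<exists>a\<in>{(0,0),(1,0),(0,1),(1,1)}.
     t = AUT_d D4 a \<or> t = AUT_d D4 a \<otimes>\<^bsub>AutoGroup D4\<^esub> D4_aut 1 1"
  unfolding ball_AutoGroup_D4 by (simp add: AUT_d_D4 D4_aut_mult)

lemma Z0_AUT_D4_determined:
  "\<forall>x\<in>carrier (AutoGroup D4). \<forall>v\<in>carrier D4. AUT_d D4 v = commut (AutoGroup D4) x (D4_aut 1 1) \<longrightarrow>
     x = D4_aut (1 + 2 * (fst v mod 2)) (fst (x (0,1))) \<and> fst (x (0,1)) < 4 \<and>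
     (\<forall>a\<in>{(0,0),(1,0),(0,1),(1,1)}.
        x a \<otimes>\<^bsub>D4\<^esub> inv\<^bsub>D4\<^esub> a = Z0_cochain (fst v) (fst (x (0,1))) (AUT_d D4 a) \<and>
        (x a \<otimes>\<^bsub>D4\<^esub> inv\<^bsub>D4\<^esub> a) \<otimes>\<^bsub>D4\<^esub> AUT_d D4 a v
          = Z0_cochain (fst v) (fst (x (0,1))) (AUT_d D4 a \<otimes>\<^bsub>AutoGroup D4\<^esub> D4_aut 1 1))"
  unfolding ball_AutoGroup_D4 ball_D4 by (simp add: AUT_d_D4 commut_def D4_aut_mult D4_aut_inv D4_inv)

lemma Z0_AUT_D4_cases:
  assumes z: "z \<in> carrier Z0_AUT_D4"
  obtains c j where "c < 4" "j < 4" "z = Z0_elem c j"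
proof -
  obtain x \<xi> where z_eq: "z = (x, \<xi>)" by fastforce
  have x: "x \<in> carrier (AutoGroup D4)" and \<xi>: "\<xi> \<in> carrier (AutoGroup D4) \<rightarrow>\<^sub>E carrier D4"
    and boundary: "\<forall>t\<in>carrier (AutoGroup D4). AUT_d D4 (\<xi> t) = commut (AutoGroup D4) x t"
    and on_inner: "\<forall>a\<in>carrier D4. \<xi> (AUT_d D4 a) = x a \<otimes>\<^bsub>D4\<^esub> inv\<^bsub>D4\<^esub> a"
    and cocycle: "\<forall>s\<in>carrier (AutoGroup D4). \<forall>t\<in>carrier (AutoGroup D4).
                    \<xi> (s \<otimes>\<^bsub>AutoGroup D4\<^esub> t) = \<xi> s \<otimes>\<^bsub>D4\<^esub> s (\<xi> t)"
    using z unfolding z_eq Z0_def AUT_act_def by auto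
  define v where "v = \<xi> (D4_aut 1 1)"
  have \<tau>: "D4_aut 1 1 \<in> carrier (AutoGroup D4)" by (simp add: carrier_AutoGroup_D4)
  then have v: "v \<in> carrier D4" unfolding v_def using \<xi> by (auto simp del: mem_carrier_D4)
  define c j where "c = fst v" and "j = fst (x (0,1))"
  have "AUT_d D4 v = commut (AutoGroup D4) x (D4_aut 1 1)"
    unfolding v_def using boundary \<tau> by blast
  then have x_eq: "x = D4_aut (1 + 2 * (c mod 2)) j" and j: "j < 4"
    and determined: "\<forall>a\<in>{(0,0),(1,0),(0,1),(1,1)}.
        x a \<otimes>\<^bsub>D4\<^esub> inv\<^bsub>D4\<^esub> a = Z0_cochain c j (AUT_d D4 a) \<and>
        (x a \<otimes>\<^bsub>D4\<^esub> inv\<^bsub>D4\<^esub> a) \<otimes>\<^bsub>D4\<^esub> AUT_d D4 a v = Z0_cochain c j (AUT_d D4 a \<otimes>\<^bsub>AutoGroup D4\<^esub> D4_aut 1 1)"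
    using Z0_AUT_D4_determined x v unfolding c_def j_def by blast+
  have c: "c < 4" using v by (simp add: c_def)
  have "\<xi> t = Z0_cochain c j t" if t: "t \<in> carrier (AutoGroup D4)" for t
  proof -
    obtain a where a: "a \<in> {(0,0),(1,0),(0,1),(1,1)}"
      and "t = AUT_d D4 a \<or> t = AUT_d D4 a \<otimes>\<^bsub>AutoGroup D4\<^esub> D4_aut 1 1"
      using AutoGroup_D4_decomposition t by blast
    moreover have "a \<in> carrier D4" using a by auto
    ultimately show ?thesis
      using determined on_inner cocycle \<tau> group.AUT_d_in_carrier[OF group_D4]
      by (auto simp: v_def simp del: mem_carrier_D4)
  qed
  then have "\<xi> = restrict (Z0_cochain c j) (carrier (AutoGroup D4))"
    using \<xi> by (auto simp: PiE_iff intro: extensionalityI)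
  with x_eq c j that show ?thesis by (simp add: z_eq Z0_elem_def)
qed

lemma mod4_twisted_sum:
  fixes u c1 c2 j1 j2 J e :: nat
  shows "(u * ((c2 * J + e * j2) mod 4) mod 4 + (c1 * J + e * j1) mod 4) mod 4
       = ((u * c2 + c1) mod 4 * J + e * ((u * j2 + j1) mod 4)) mod 4"
proof -
  have "(u * ((c2 * J + e * j2) mod 4) mod 4 + (c1 * J + e * j1) mod 4) mod 4
      = (u * (c2 * J + e * j2) + (c1 * J + e * j1)) mod 4"
    by (simp only: mod_mult_right_eq mod_add_eq)
  also have "\<dots> = ((u * c2 + c1) * J + e * (u * j2 + j1)) mod 4"
    by (simp add: algebra_simps)
  also have "\<dots> = ((u * c2 + c1) mod 4 * J + e * ((u * j2 + j1) mod 4)) mod 4"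
    by (intro mod_add_cong mod_mult_cong) simp_all
  finally show ?thesis .
qed

lemma Z0_cochain_twisted_mult:
  assumes t: "t \<in> carrier (AutoGroup D4)"
  shows "D4_aut u1 j1 (Z0_cochain c2 j2 t) \<otimes>\<^bsub>D4\<^esub> Z0_cochain c1 j1 t
       = Z0_cochain ((u1 * c2 + c1) mod 4) ((u1 * j2 + j1) mod 4) t"
proof -
  obtain u j where "t = D4_aut u j"
    using t auto_D4_cases by (metis carrier_AutoGroup)
  then show ?thesis
    using mod4_twisted_sum[of u1 c2 "j mod 4" "of_bool (u mod 4 = 3)" j2 c1 j1]
    by (simp only: Z0_cochain_D4_aut D4_aut_apply mod_less_divisor zero_less_numeral
          D4_mult if_True mod_0 add_0 mult_zero_left add_0_right simp_thms)
qed

lemma Z0_elem_mult: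
  assumes "c1 < 4" "j1 < 4" "c2 < 4" "j2 < 4"
  shows "Z0_elem c1 j1 \<otimes>\<^bsub>Z0_AUT_D4\<^esub> Z0_elem c2 j2
       = Z0_elem (((1 + 2 * (c1 mod 2)) * c2 + c1) mod 4) (((1 + 2 * (c1 mod 2)) * j2 + j1) mod 4)"
proof -
  have sign: "D4_aut (1 + 2 * (c1 mod 2)) j1 \<otimes>\<^bsub>AutoGroup D4\<^esub> D4_aut (1 + 2 * (c2 mod 2)) j2
      = D4_aut (1 + 2 * (((1 + 2 * (c1 mod 2)) * c2 + c1) mod 4 mod 2)) (((1 + 2 * (c1 mod 2)) * j2 + j1) mod 4)"
    using assms by (auto simp: D4_aut_mult mod2_eq_if) presburger+
  have "(\<lambda>t\<in>carrier (AutoGroup D4). AUT_act (D4_aut (1 + 2 * (c1 mod 2)) j1)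
            (restrict (Z0_cochain c2 j2) (carrier (AutoGroup D4)) t)
          \<otimes>\<^bsub>D4\<^esub> restrict (Z0_cochain c1 j1) (carrier (AutoGroup D4)) t)
      = restrict (Z0_cochain (((1 + 2 * (c1 mod 2)) * c2 + c1) mod 4) (((1 + 2 * (c1 mod 2)) * j2 + j1) mod 4))
          (carrier (AutoGroup D4))"
    by (intro restrict_ext) (simp add: AUT_act_def Z0_cochain_twisted_mult del: Z0_cochain_D4_aut)
  with sign show ?thesis
    by (simp add: Z0_elem_def Z0_def)
qed

definition Z0_coords :: "Z0_elt \<Rightarrow> nat \<times> nat"
  where "Z0_coords z = (fst (snd z (D4_aut 1 1)), fst (fst z (0,1)))"

lemma Z0_coords_elem [simp]: "c < 4 \<Longrightarrow> j < 4 \<Longrightarrow> Z0_coords (Z0_elem c j) = (c, j)"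
  by (simp add: Z0_coords_def Z0_elem_def carrier_AutoGroup_D4)

lemma Z0_elem_inject:
  "c < 4 \<Longrightarrow> j < 4 \<Longrightarrow> c' < 4 \<Longrightarrow> j' < 4 \<Longrightarrow> Z0_elem c j = Z0_elem c' j' \<longleftrightarrow> c = c' \<and> j = j'"
  by (metis Z0_coords_elem prod.inject)

section \<open>\<open>Z\<^sub>0(AUT(D4)) \<cong> C2 \<times> D4\<close>\<close>

lemma carrier_C2: "carrier C2 = {0, 1}"
  by (auto simp: C2_def carrier_integer_mod_group)

lemma C2_mult [simp]: "x \<otimes>\<^bsub>C2\<^esub> y = (x + y) mod 2"
  by (simp add: C2_def)

lemma C2_one [simp]: "\<one>\<^bsub>C2\<^esub> = 0"
  by (simp add: C2_def)

lemma group_C2: "group C2"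
  by (simp add: C2_def)

definition Z0_to_C2_D4 :: "Z0_elt \<Rightarrow> int \<times> nat \<times> nat"
  where "Z0_to_C2_D4 z = (case Z0_coords z of (c, j) \<Rightarrow> (int (c div 2), (j, c mod 2)))"

lemma Z0_to_C2_D4_elem [simp]:
  "c < 4 \<Longrightarrow> j < 4 \<Longrightarrow> Z0_to_C2_D4 (Z0_elem c j) = (int (c div 2), (j, c mod 2))"
  by (simp add: Z0_to_C2_D4_def)

lemma Z0_to_C2_D4_elem_mult:
  assumes "c1 < 4" "j1 < 4" "c2 < 4" "j2 < 4"
  shows "Z0_to_C2_D4 (Z0_elem c1 j1 \<otimes>\<^bsub>Z0_AUT_D4\<^esub> Z0_elem c2 j2)
       = Z0_to_C2_D4 (Z0_elem c1 j1) \<otimes>\<^bsub>C2 \<times>\<times> D4\<^esub> Z0_to_C2_D4 (Z0_elem c2 j2)"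
proof -
  have "\<forall>c1\<in>{0,1,2,3}. \<forall>j1\<in>{0,1,2,3}. \<forall>c2\<in>{0,1,2,3}. \<forall>j2\<in>{0,1,2,3::nat}.
      Z0_to_C2_D4 (Z0_elem (((1 + 2 * (c1 mod 2)) * c2 + c1) mod 4) (((1 + 2 * (c1 mod 2)) * j2 + j1) mod 4))
      = Z0_to_C2_D4 (Z0_elem c1 j1) \<otimes>\<^bsub>C2 \<times>\<times> D4\<^esub> Z0_to_C2_D4 (Z0_elem c2 j2)"
    by simp
  moreover have "c1 \<in> {0,1,2,3}" "j1 \<in> {0,1,2,3}" "c2 \<in> {0,1,2,3}" "j2 \<in> {0,1,2,3}"
    using assms by (simp_all only: less_4_iff)
  ultimately show ?thesis
    using assms by (simp only: Z0_elem_mult)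
qed

lemma Z0_AUT_D4_mult_closed:
  "z \<in> carrier Z0_AUT_D4 \<Longrightarrow> w \<in> carrier Z0_AUT_D4 \<Longrightarrow> z \<otimes>\<^bsub>Z0_AUT_D4\<^esub> w \<in> carrier Z0_AUT_D4"
  by (elim Z0_AUT_D4_cases) (simp add: Z0_elem_mult Z0_elem_in_carrier)

lemma Z0_to_C2_D4_mult:
  "z \<in> carrier Z0_AUT_D4 \<Longrightarrow> w \<in> carrier Z0_AUT_D4 \<Longrightarrow>
    Z0_to_C2_D4 (z \<otimes>\<^bsub>Z0_AUT_D4\<^esub> w) = Z0_to_C2_D4 z \<otimes>\<^bsub>C2 \<times>\<times> D4\<^esub> Z0_to_C2_D4 w"
  by (elim Z0_AUT_D4_cases) (simp only: Z0_to_C2_D4_elem_mult)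

lemma one_Z0_AUT_D4: "\<one>\<^bsub>Z0_AUT_D4\<^esub> = Z0_elem 0 0"
  by (auto simp: Z0_def Z0_elem_def one_AutoGroup_D4 Z0_cochain_def intro!: restrict_ext)

lemma Z0_to_C2_D4_bij: "bij_betw Z0_to_C2_D4 (carrier Z0_AUT_D4) (carrier (C2 \<times>\<times> D4))"
proof (rule bij_betw_imageI)
  show "inj_on Z0_to_C2_D4 (carrier Z0_AUT_D4)"
  proof (rule inj_onI)
    fix z w assume "z \<in> carrier Z0_AUT_D4" "w \<in> carrier Z0_AUT_D4"
      and eq: "Z0_to_C2_D4 z = Z0_to_C2_D4 w"
    then obtain c j c' j' where "c < 4" "j < 4" "z = Z0_elem c j" "c' < 4" "j' < 4" "w = Z0_elem c' j'"
      by (metis Z0_AUT_D4_cases)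
    moreover from this eq have "c div 2 = c' div 2" "c mod 2 = c' mod 2" "j = j'"
      by simp_all
    ultimately show "z = w" by (metis div_mult_mod_eq)
  qed
  show "Z0_to_C2_D4 ` carrier Z0_AUT_D4 = carrier (C2 \<times>\<times> D4)"
  proof (intro equalityI subsetI)
    fix y assume "y \<in> Z0_to_C2_D4 ` carrier Z0_AUT_D4"
    then show "y \<in> carrier (C2 \<times>\<times> D4)"
      by (auto simp: carrier_C2 elim!: Z0_AUT_D4_cases)
  next
    fix y assume "y \<in> carrier (C2 \<times>\<times> D4)"
    then obtain e k s where "y = (e, (k, s))" "e \<in> {0, 1}" "k < 4" "s < 2"
      by (auto simp: carrier_C2)
    then have "y = Z0_to_C2_D4 (Z0_elem (2 * nat e + s) k)" and "2 * nat e + s < 4"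
      by auto
    with \<open>k < 4\<close> show "y \<in> Z0_to_C2_D4 ` carrier Z0_AUT_D4"
      using Z0_elem_in_carrier by blast
  qed
qed

lemma group_Z0_AUT_D4: "group Z0_AUT_D4"
  by (rule group_of_mult_preserving_bij[OF DirProd_group[OF group_C2 group_D4] Z0_AUT_D4_mult_closed
        _ Z0_to_C2_D4_bij Z0_to_C2_D4_mult])
     (simp_all add: one_Z0_AUT_D4 Z0_elem_in_carrier)

lemma Z0_to_C2_D4_iso: "Z0_to_C2_D4 \<in> iso Z0_AUT_D4 (C2 \<times>\<times> D4)"
  using Z0_to_C2_D4_bij bij_betw_imp_funcset[OF Z0_to_C2_D4_bij] Z0_to_C2_D4_mult
  by (simp add: iso_def hom_def)

section \<open>The homotopy groups of \<open>Z\<^sub>*(AUT(D4))\<close>\<close>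

abbreviation delta_AUT_D4 :: "nat \<times> nat \<Rightarrow> Z0_elt"
  where "delta_AUT_D4 \<equiv> Zdelta D4 (AutoGroup D4) (AUT_d D4) AUT_act"

lemma Zdelta_AUT_D4:
  assumes a: "a \<in> carrier D4"
  shows "delta_AUT_D4 a = Z0_elem (if snd a = 0 then 0 else 3) (if even (fst a) then 0 else 2)"
proof -
  have "\<forall>a\<in>carrier D4.
      AUT_d D4 a = D4_aut (1 + 2 * ((if snd a = 0 then 0 else 3) mod 2)) (if even (fst a) then 0 else 2) \<and>
      (\<forall>t\<in>carrier (AutoGroup D4).
         a \<otimes>\<^bsub>D4\<^esub> inv\<^bsub>D4\<^esub> (t a) = Z0_cochain (if snd a = 0 then 0 else 3) (if even (fst a) then 0 else 2) t)"
    unfolding ball_D4 ball_AutoGroup_D4 by (simp add: AUT_d_D4 D4_inv)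
  with a show ?thesis
    by (auto simp: Zdelta_def Z0_elem_def AUT_act_def simp del: mem_carrier_D4 Z0_cochain_D4_aut
        intro!: restrict_ext)
qed

lemma image_Zdelta_AUT_D4: "delta_AUT_D4 ` carrier D4 = {Z0_elem 0 0, Z0_elem 0 2, Z0_elem 3 0, Z0_elem 3 2}"
proof -
  have "delta_AUT_D4 ` carrier D4 = delta_AUT_D4 ` {(0,0),(0,1),(1,0),(1,1),(2,0),(2,1),(3,0),(3,1)}"
    by (simp only: carrier_D4)
  also have "\<dots> = {Z0_elem 0 0, Z0_elem 0 2, Z0_elem 3 0, Z0_elem 3 2}"
    by (simp add: Zdelta_AUT_D4 insert_commute)
  finally show ?thesis .
qed

lemma kernel_Zdelta_AUT_D4: "kernel D4 Z0_AUT_D4 delta_AUT_D4 = {(0,0), (2,0)}"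
proof -
  have "\<forall>a\<in>carrier D4. delta_AUT_D4 a = \<one>\<^bsub>Z0_AUT_D4\<^esub> \<longleftrightarrow> a = (0,0) \<or> a = (2,0)"
    unfolding ball_D4 one_Z0_AUT_D4 by (simp add: Zdelta_AUT_D4 Z0_elem_inject)
  then have "kernel D4 Z0_AUT_D4 delta_AUT_D4 = {a \<in> carrier D4. a = (0,0) \<or> a = (2,0)}"
    unfolding kernel_def by blast
  also have "\<dots> = {(0,0), (2,0)}" by auto
  finally show ?thesis .
qed

definition Z0_to_C2_C2 :: "Z0_elt \<Rightarrow> int \<times> int"
  where "Z0_to_C2_C2 z = (case Z0_coords z of (c, j) \<Rightarrow> (int (j mod 2), int ((c div 2 + c mod 2) mod 2)))"

lemma Z0_to_C2_C2_elem [simp]: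
  "c < 4 \<Longrightarrow> j < 4 \<Longrightarrow> Z0_to_C2_C2 (Z0_elem c j) = (int (j mod 2), int ((c div 2 + c mod 2) mod 2))"
  by (simp add: Z0_to_C2_C2_def)

lemma Z0_to_C2_C2_mult:
  assumes "z \<in> carrier Z0_AUT_D4" "w \<in> carrier Z0_AUT_D4"
  shows "Z0_to_C2_C2 (z \<otimes>\<^bsub>Z0_AUT_D4\<^esub> w) = Z0_to_C2_C2 z \<otimes>\<^bsub>C2 \<times>\<times> C2\<^esub> Z0_to_C2_C2 w"
proof -
  obtain c1 j1 c2 j2 where cj: "c1 < 4" "j1 < 4" "c2 < 4" "j2 < 4"
    and zw: "z = Z0_elem c1 j1" "w = Z0_elem c2 j2"
    using assms by (metis Z0_AUT_D4_cases)
  have "\<forall>c1\<in>{0,1,2,3}. \<forall>j1\<in>{0,1,2,3}. \<forall>c2\<in>{0,1,2,3}. \<forall>j2\<in>{0,1,2,3::nat}.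
      Z0_to_C2_C2 (Z0_elem (((1 + 2 * (c1 mod 2)) * c2 + c1) mod 4) (((1 + 2 * (c1 mod 2)) * j2 + j1) mod 4))
      = Z0_to_C2_C2 (Z0_elem c1 j1) \<otimes>\<^bsub>C2 \<times>\<times> C2\<^esub> Z0_to_C2_C2 (Z0_elem c2 j2)"
    by simp
  moreover have "c1 \<in> {0,1,2,3}" "j1 \<in> {0,1,2,3}" "c2 \<in> {0,1,2,3}" "j2 \<in> {0,1,2,3}"
    using cj by (simp_all only: less_4_iff)
  ultimately show ?thesis
    using cj by (simp only: zw Z0_elem_mult)
qed

lemma Z0_to_C2_C2_group_hom: "group_hom Z0_AUT_D4 (C2 \<times>\<times> C2) Z0_to_C2_C2"
proof (intro group_hom.intro group_hom_axioms.intro homI)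
  show "Z0_to_C2_C2 z \<in> carrier (C2 \<times>\<times> C2)" if "z \<in> carrier Z0_AUT_D4" for z
    using that by (elim Z0_AUT_D4_cases) (simp add: carrier_C2; presburger)
qed (simp_all add: group_Z0_AUT_D4 DirProd_group group_C2 Z0_to_C2_C2_mult)

lemma Z0_to_C2_C2_surj: "Z0_to_C2_C2 ` carrier Z0_AUT_D4 = carrier (C2 \<times>\<times> C2)"
proof
  show "Z0_to_C2_C2 ` carrier Z0_AUT_D4 \<subseteq> carrier (C2 \<times>\<times> C2)"
    using group_hom.hom_closed[OF Z0_to_C2_C2_group_hom] by blast
  have "carrier (C2 \<times>\<times> C2) \<subseteq> Z0_to_C2_C2 ` {Z0_elem 0 0, Z0_elem 1 0, Z0_elem 0 1, Z0_elem 1 1}"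
    by (auto simp: carrier_C2)
  moreover have "{Z0_elem 0 0, Z0_elem 1 0, Z0_elem 0 1, Z0_elem 1 1} \<subseteq> carrier Z0_AUT_D4"
    by (simp add: Z0_elem_in_carrier)
  ultimately show "carrier (C2 \<times>\<times> C2) \<subseteq> Z0_to_C2_C2 ` carrier Z0_AUT_D4"
    by (meson image_mono order_trans)
qed

lemma kernel_Z0_to_C2_C2: "kernel Z0_AUT_D4 (C2 \<times>\<times> C2) Z0_to_C2_C2 = delta_AUT_D4 ` carrier D4"
proof (unfold image_Zdelta_AUT_D4, intro equalityI subsetI)
  fix z assume "z \<in> kernel Z0_AUT_D4 (C2 \<times>\<times> C2) Z0_to_C2_C2"
  then have z: "z \<in> carrier Z0_AUT_D4" and "Z0_to_C2_C2 z = (0, 0)"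
    by (simp_all add: kernel_def)
  moreover obtain c j where "c < 4" "j < 4" "z = Z0_elem c j"
    using z by (rule Z0_AUT_D4_cases)
  moreover have "\<forall>c\<in>{0,1,2,3}. \<forall>j\<in>{0,1,2,3::nat}. Z0_to_C2_C2 (Z0_elem c j) = (0, 0) \<longrightarrow>
      Z0_elem c j \<in> {Z0_elem 0 0, Z0_elem 0 2, Z0_elem 3 0, Z0_elem 3 2}"
    by (simp add: Z0_elem_inject)
  ultimately show "z \<in> {Z0_elem 0 0, Z0_elem 0 2, Z0_elem 3 0, Z0_elem 3 2}"
    unfolding less_4_iff by blast
qed (auto simp: kernel_def Z0_elem_in_carrier)

lemma pi0_Z_AUT_D4: "pi0 D4 Z0_AUT_D4 delta_AUT_D4 \<cong> C2 \<times>\<times> C2"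
  unfolding pi0_def kernel_Z0_to_C2_C2[symmetric]
  by (rule group_hom.FactGroup_iso[OF Z0_to_C2_C2_group_hom Z0_to_C2_C2_surj])

lemma pi1_Z_AUT_D4: "pi1 D4 Z0_AUT_D4 delta_AUT_D4 \<cong> C2"
proof (rule is_isoI)
  have "carrier (pi1 D4 Z0_AUT_D4 delta_AUT_D4) = {(0,0), (2,0)}"
    by (simp add: pi1_def kernel_Zdelta_AUT_D4)
  then show "(\<lambda>a. int (fst a div 2)) \<in> iso (pi1 D4 Z0_AUT_D4 delta_AUT_D4) C2"
    by (auto simp: iso_def hom_def bij_betw_def carrier_C2 inj_on_def pi1_def)
qed

lemma card_pi0_Norrie_centre_AUT_D4:
  "card (carrier (pi0 (norrie_G1 D4 (AutoGroup D4) AUT_act) (norrie_G0 D4 (AutoGroup D4) AUT_act) (AUT_d D4))) = 1"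
  by (simp add: pi0_def FactGroup_def RCOSETS_def Norrie_centre_G0_AUT_D4)

lemma card_pi0_Z_AUT_D4: "card (carrier (pi0 D4 Z0_AUT_D4 delta_AUT_D4)) = 4"
  using iso_same_card[OF pi0_Z_AUT_D4] by (simp add: carrier_C2)

lemma pi0_Norrie_centre_not_iso_pi0_Z_AUT_D4:
  "f \<notin> iso (pi0 (norrie_G1 D4 (AutoGroup D4) AUT_act) (norrie_G0 D4 (AutoGroup D4) AUT_act) (AUT_d D4))
          (pi0 D4 Z0_AUT_D4 delta_AUT_D4)"
  using bij_betw_same_card card_pi0_Norrie_centre_AUT_D4 card_pi0_Z_AUT_D4
  by (fastforce simp: iso_def)

theorem mainTheorem12:
  defines "Aut \<equiv> AutoGroup D4"
      and "d \<equiv> AUT_d D4"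
      and "act \<equiv> AUT_act"
  shows "crossed_module D4 Aut d act
    \<and> D4_a [^]\<^bsub>D4\<^esub> (4::nat) = \<one>\<^bsub>D4\<^esub> \<and> D4_b [^]\<^bsub>D4\<^esub> (2::nat) = \<one>\<^bsub>D4\<^esub>
    \<and> D4_b \<otimes>\<^bsub>D4\<^esub> D4_a \<otimes>\<^bsub>D4\<^esub> D4_b = D4_a [^]\<^bsub>D4\<^esub> (3::nat)
    \<and> Z0 D4 Aut d act \<cong> C2 \<times>\<times> D4
    \<and> pi0 D4 (Z0 D4 Aut d act) (Zdelta D4 Aut d act) \<cong> C2 \<times>\<times> C2
    \<and> pi1 D4 (Z0 D4 Aut d act) (Zdelta D4 Aut d act) \<cong> C2
    \<and> carrier (norrie_G1 D4 Aut act) = {\<one>\<^bsub>D4\<^esub>, D4_a [^]\<^bsub>D4\<^esub> (2::nat)}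
    \<and> carrier (norrie_G0 D4 Aut act) = {\<one>\<^bsub>Aut\<^esub>}
    \<and> pi0_map D4 (Z0 D4 Aut d act) (Zdelta D4 Aut d act) (j0 D4 Aut)
        \<notin> iso (pi0 (norrie_G1 D4 Aut act) (norrie_G0 D4 Aut act) d)
              (pi0 D4 (Z0 D4 Aut d act) (Zdelta D4 Aut d act))
    \<and> \<not> weak_equivalence (norrie_G1 D4 Aut act) (norrie_G0 D4 Aut act) d
          D4 (Z0 D4 Aut d act) (Zdelta D4 Aut d act) (\<lambda>a. a) (j0 D4 Aut)"
  unfolding Aut_def d_def act_def weak_equivalence_def
  using group.crossed_module_AUT[OF group_D4] D4_relations is_isoI[OF Z0_to_C2_D4_iso]
    pi0_Z_AUT_D4 pi1_Z_AUT_D4 Norrie_centre_G1_AUT_D4 Norrie_centre_G0_AUT_D4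
    pi0_Norrie_centre_not_iso_pi0_Z_AUT_D4
  by blast

end
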